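(* Let $(\Omega,\mathcal{F},\mathbb{P})$ be a probability space, let $n\in\mathbb{N}$, and let $Y_1,\ldots,Y_n$ be real-valued random variables with $\mathbb{E}[|Y_i|]<\infty$ for each $i$. For an integrable random variable $Z$ let $\mathrm{MAD}(Z):=\mathbb{E}\big[|Z-\mathbb{E}[Z]|\big]$. Let $\mathbb{R}^n_+=\{\boldsymbol{x}\in\mathbb{R}^n: x_i\ge 0 \text{ for all } i\}$ and $\Delta^{n-1}=\{\boldsymbol{x}\in\mathbb{R}^n_+:\sum_{i=1}^n x_i=1\}$. Then the following are equivalent: (i) $\mathrm{MAD}\big(\sum_{i=1}^n x_iY_i\big)=\sum_{i=1}^n x_i\,\mathrm{MAD}(Y_i)$ for every $\boldsymbol{x}\in\mathbb{R}^n_+$; (ii) $\mathrm{MAD}\big(\sum_{i=1}^n x_iY_i\big)=\sum_{i=1}^n x_i\,\mathrm{MAD}(Y_i)$ for every $\boldsymbol{x}\in\Delta^{n-1}$; (iii) $\mathrm{MAD}\big(\sum_{i\in I}Y_i\big)=\sum_{i\in I}\mathrm{MAD}(Y_i)$ for every nonempty subset $I\subseteq\{1,\ldots,n\}$; (iv) $(Y_i-\mathbb{E}[Y_i])(Y_j-\mathbb{E}[Y_j])\geq 0$ almost surely for every $i,j\in\{1,\ldots,n\}$ with $i\neq j$. *)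

theory Defs
  imports "HOL-Probability.Probability"
begin

definition MAD :: "'a measure \<Rightarrow> ('a \<Rightarrow> real) \<Rightarrow> real" where
  "MAD M Z = (\<integral>\<omega>. \<bar>Z \<omega> - (\<integral>\<omega>'. Z \<omega>' \<partial>M)\<bar> \<partial>M)"

end

theory Submission
  imports Defs
begin

text \<open>
  Centre each variable, \<open>Z\<^sub>i = Y\<^sub>i - E Y\<^sub>i\<close>. By linearity of expectation the MAD of a
  nonnegative combination is \<open>E |\<Sum> x\<^sub>i Z\<^sub>i|\<close>, while the combination of the MADs is
  \<open>E (\<Sum> x\<^sub>i |Z\<^sub>i|)\<close>; the triangle inequality bounds the integrand of the first by that of
  the second. If the centred variables pairwise have the same sign almost surely, the two
  integrands agree almost surely, so additivity holds for all nonnegative weights.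
  Conversely, uniform weights on a subset turn additivity on the simplex into additivity
  over subsets, and additivity for a pair \<open>{i, j}\<close> means that the nonnegative function
  \<open>|Z\<^sub>i| + |Z\<^sub>j| - |Z\<^sub>i + Z\<^sub>j|\<close> has integral zero, hence vanishes almost surely, which is
  exactly \<open>Z\<^sub>i Z\<^sub>j \<ge> 0\<close> almost surely.
\<close>

lemma abs_add_eq_iff_mult_nonneg:
  fixes a b :: "'a :: linordered_idom"
  shows "\<bar>a + b\<bar> = \<bar>a\<bar> + \<bar>b\<bar> \<longleftrightarrow> 0 \<le> a * b"
  by (cases "0 \<le> a"; cases "0 \<le> b")
    (auto simp: abs_if zero_le_mult_iff mult_le_0_iff)

lemma abs_sum_mult_eq_sum_mult_abs:
  fixes x a :: "'b \<Rightarrow> 'a :: linordered_idom"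
  assumes "\<And>i. i \<in> I \<Longrightarrow> 0 \<le> x i"
    and "\<And>i j. i \<in> I \<Longrightarrow> j \<in> I \<Longrightarrow> i \<noteq> j \<Longrightarrow> 0 \<le> a i * a j"
  shows "\<bar>\<Sum>i\<in>I. x i * a i\<bar> = (\<Sum>i\<in>I. x i * \<bar>a i\<bar>)"
proof (cases "\<exists>k\<in>I. 0 < a k")
  case True
  then obtain k where k: "k \<in> I" "0 < a k" by blast
  have "0 \<le> a j" if "j \<in> I" for j
    using k assms(2)[OF k(1) that] by (cases "j = k") (auto simp: zero_le_mult_iff)
  then show ?thesis
    using assms(1) by (simp add: sum_nonneg)
next
  case False
  then have nonpos: "a j \<le> 0" if "j \<in> I" for j
    using that by (auto simp: not_less)
  then have "\<bar>\<Sum>i\<in>I. x i * a i\<bar> = (\<Sum>i\<in>I. x i * - a i)"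
    using assms(1) by (simp add: sum_nonpos mult_nonneg_nonpos sum_negf)
  also have "\<dots> = (\<Sum>i\<in>I. x i * \<bar>a i\<bar>)"
    using nonpos by (intro sum.cong) auto
  finally show ?thesis .
qed

lemma AE_mult_nonneg_of_integral_abs_add:
  fixes f g :: "'a \<Rightarrow> real"
  assumes f: "integrable M f" and g: "integrable M g"
    and eq: "(\<integral>\<omega>. \<bar>f \<omega> + g \<omega>\<bar> \<partial>M) = (\<integral>\<omega>. \<bar>f \<omega>\<bar> \<partial>M) + (\<integral>\<omega>. \<bar>g \<omega>\<bar> \<partial>M)"
  shows "AE \<omega> in M. 0 \<le> f \<omega> * g \<omega>"
proof -
  define d where "d \<omega> = \<bar>f \<omega>\<bar> + \<bar>g \<omega>\<bar> - \<bar>f \<omega> + g \<omega>\<bar>" for \<omega>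
  have d_int: "integrable M d"
    unfolding d_def using f g by auto
  have "integral\<^sup>L M d = 0"
    unfolding d_def using f g eq by auto
  moreover have "AE \<omega> in M. 0 \<le> d \<omega>"
    unfolding d_def by (simp add: abs_triangle_ineq)
  ultimately have "AE \<omega> in M. d \<omega> = 0"
    using integral_nonneg_eq_0_iff_AE[OF d_int] by simp
  then show ?thesis
    by eventually_elim (simp add: d_def flip: abs_add_eq_iff_mult_nonneg)
qed

lemma MAD_scale:
  assumes "0 \<le> c"
  shows "MAD M (\<lambda>\<omega>. c * f \<omega>) = c * MAD M f"
proof -
  have "\<bar>c * f \<omega> - c * (\<integral>\<omega>'. f \<omega>' \<partial>M)\<bar> = c * \<bar>f \<omega> - (\<integral>\<omega>'. f \<omega>' \<partial>M)\<bar>" for \<omega>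
    using assms by (simp add: abs_mult right_diff_distrib[symmetric])
  then show ?thesis
    unfolding MAD_def by simp
qed

lemma MAD_sum_eq_sum_MAD_of_simplex:
  fixes Y :: "'b \<Rightarrow> 'a \<Rightarrow> real"
  assumes simplex: "\<And>x. (\<forall>i\<in>A. 0 \<le> x i) \<and> sum x A = 1 \<Longrightarrow>
      MAD M (\<lambda>\<omega>. \<Sum>i\<in>A. x i * Y i \<omega>) = (\<Sum>i\<in>A. x i * MAD M (Y i))"
    and A: "finite A" and I: "I \<subseteq> A" "I \<noteq> {}"
  shows "MAD M (\<lambda>\<omega>. \<Sum>i\<in>I. Y i \<omega>) = (\<Sum>i\<in>I. MAD M (Y i))"
proof -
  define k where "k = real (card I)"
  have k_pos: "0 < k"
    unfolding k_def using I A by (simp add: card_gt_0_iff finite_subset)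
  define x where "x i = (if i \<in> I then 1 / k else 0)" for i
  have uniform: "(\<Sum>i\<in>A. x i * g i) = (\<Sum>i\<in>I. g i) / k" for g :: "'b \<Rightarrow> real"
  proof -
    have "(\<Sum>i\<in>A. x i * g i) = (\<Sum>i\<in>I. x i * g i)"
      using A I by (intro sum.mono_neutral_right) (auto simp: x_def)
    then show ?thesis
      by (simp add: x_def sum_divide_distrib)
  qed
  have "sum x A = 1"
    using uniform[of "\<lambda>_. 1"] k_pos by (simp add: k_def)
  moreover have "\<forall>i\<in>A. 0 \<le> x i"
    unfolding x_def using k_pos by simp
  ultimately have "MAD M (\<lambda>\<omega>. (1 / k) * (\<Sum>i\<in>I. Y i \<omega>)) = (1 / k) * (\<Sum>i\<in>I. MAD M (Y i))"
    using simplex[of x] by (simp add: uniform)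
  then show ?thesis
    using MAD_scale[of "1 / k" M "\<lambda>\<omega>. \<Sum>i\<in>I. Y i \<omega>"] k_pos by simp
qed

lemma MAD_sum_eq_integral_centered:
  fixes Y :: "'b \<Rightarrow> 'a \<Rightarrow> real"
  assumes "\<And>i. i \<in> I \<Longrightarrow> integrable M (Y i)"
  shows "MAD M (\<lambda>\<omega>. \<Sum>i\<in>I. x i * Y i \<omega>) =
    (\<integral>\<omega>. \<bar>\<Sum>i\<in>I. x i * (Y i \<omega> - (\<integral>\<omega>'. Y i \<omega>' \<partial>M))\<bar> \<partial>M)"
proof -
  have "(\<integral>\<omega>. (\<Sum>i\<in>I. x i * Y i \<omega>) \<partial>M) = (\<Sum>i\<in>I. x i * (\<integral>\<omega>. Y i \<omega> \<partial>M))"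
    using assms by (simp add: Bochner_Integration.integral_sum)
  then show ?thesis
    unfolding MAD_def by (simp add: sum_subtractf right_diff_distrib)
qed

context finite_measure
begin

lemma AE_centered_mult_nonneg_of_MAD_add:
  assumes f: "integrable M f" and g: "integrable M g"
    and "MAD M (\<lambda>\<omega>. f \<omega> + g \<omega>) = MAD M f + MAD M g"
  shows "AE \<omega> in M. 0 \<le> (f \<omega> - (\<integral>\<omega>'. f \<omega>' \<partial>M)) * (g \<omega> - (\<integral>\<omega>'. g \<omega>' \<partial>M))"
proof (rule AE_mult_nonneg_of_integral_abs_add)
  show "integrable M (\<lambda>\<omega>. f \<omega> - (\<integral>\<omega>'. f \<omega>' \<partial>M))" "integrable M (\<lambda>\<omega>. g \<omega> - (\<integral>\<omega>'. g \<omega>' \<partial>M))"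
    using f g by auto
  show "(\<integral>\<omega>. \<bar>f \<omega> - (\<integral>\<omega>'. f \<omega>' \<partial>M) + (g \<omega> - (\<integral>\<omega>'. g \<omega>' \<partial>M))\<bar> \<partial>M) =
      (\<integral>\<omega>. \<bar>f \<omega> - (\<integral>\<omega>'. f \<omega>' \<partial>M)\<bar> \<partial>M) + (\<integral>\<omega>. \<bar>g \<omega> - (\<integral>\<omega>'. g \<omega>' \<partial>M)\<bar> \<partial>M)"
    using assms by (simp add: MAD_def Bochner_Integration.integral_add algebra_simps)
qed

lemma MAD_weighted_sum_eq_of_AE_centered_mult_nonneg:
  fixes Y :: "'b \<Rightarrow> 'a \<Rightarrow> real"
  assumes A: "finite A" and Y: "\<And>i. i \<in> A \<Longrightarrow> integrable M (Y i)"
    and x: "\<And>i. i \<in> A \<Longrightarrow> 0 \<le> x i"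
    and same_sign: "\<And>i j. i \<in> A \<Longrightarrow> j \<in> A \<Longrightarrow> i \<noteq> j \<Longrightarrow>
      AE \<omega> in M. 0 \<le> (Y i \<omega> - (\<integral>\<omega>'. Y i \<omega>' \<partial>M)) * (Y j \<omega> - (\<integral>\<omega>'. Y j \<omega>' \<partial>M))"
  shows "MAD M (\<lambda>\<omega>. \<Sum>i\<in>A. x i * Y i \<omega>) = (\<Sum>i\<in>A. x i * MAD M (Y i))"
proof -
  define Z where "Z i \<omega> = Y i \<omega> - (\<integral>\<omega>'. Y i \<omega>' \<partial>M)" for i \<omega>
  have Z_int: "integrable M (Z i)" if "i \<in> A" for i
    unfolding Z_def using Y[OF that] by auto
  have "AE \<omega> in M. \<forall>i\<in>A. \<forall>j\<in>A. i \<noteq> j \<longrightarrow> 0 \<le> Z i \<omega> * Z j \<omega>"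
    using A same_sign by (simp add: AE_finite_all Z_def)
  then have "AE \<omega> in M. \<bar>\<Sum>i\<in>A. x i * Z i \<omega>\<bar> = (\<Sum>i\<in>A. x i * \<bar>Z i \<omega>\<bar>)"
    by eventually_elim (simp add: x abs_sum_mult_eq_sum_mult_abs)
  then have "(\<integral>\<omega>. \<bar>\<Sum>i\<in>A. x i * Z i \<omega>\<bar> \<partial>M) = (\<integral>\<omega>. (\<Sum>i\<in>A. x i * \<bar>Z i \<omega>\<bar>) \<partial>M)"
    using Z_int by (intro integral_cong_AE) auto
  also have "\<dots> = (\<Sum>i\<in>A. x i * (\<integral>\<omega>. \<bar>Z i \<omega>\<bar> \<partial>M))"
    using Z_int by (subst Bochner_Integration.integral_sum) auto
  also have "\<dots> = (\<Sum>i\<in>A. x i * MAD M (Y i))"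
    by (simp add: MAD_def Z_def)
  finally show ?thesis
    using MAD_sum_eq_integral_centered[of A M Y x] Y by (simp add: Z_def)
qed

end

theorem theorem2:
  fixes M :: "'a measure" and n :: nat and Y :: "nat \<Rightarrow> 'a \<Rightarrow> real"
  assumes "prob_space M"
    and "\<And>i. i \<in> {1..n} \<Longrightarrow> Y i \<in> borel_measurable M"
    and "\<And>i. i \<in> {1..n} \<Longrightarrow> integrable M (Y i)"
  defines "C1 \<equiv> (\<forall>x :: nat \<Rightarrow> real. (\<forall>i\<in>{1..n}. 0 \<le> x i) \<longrightarrow>
              MAD M (\<lambda>\<omega>. \<Sum>i=1..n. x i * Y i \<omega>) = (\<Sum>i=1..n. x i * MAD M (Y i)))"
    and "C2 \<equiv> (\<forall>x :: nat \<Rightarrow> real. (\<forall>i\<in>{1..n}. 0 \<le> x i) \<and> (\<Sum>i=1..n. x i) = 1 \<longrightarrow>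
              MAD M (\<lambda>\<omega>. \<Sum>i=1..n. x i * Y i \<omega>) = (\<Sum>i=1..n. x i * MAD M (Y i)))"
    and "C3 \<equiv> (\<forall>I. I \<subseteq> {1..n} \<and> I \<noteq> {} \<longrightarrow>
              MAD M (\<lambda>\<omega>. \<Sum>i\<in>I. Y i \<omega>) = (\<Sum>i\<in>I. MAD M (Y i)))"
    and "C4 \<equiv> (\<forall>i\<in>{1..n}. \<forall>j\<in>{1..n}. i \<noteq> j \<longrightarrow>
              (AE \<omega> in M. 0 \<le> (Y i \<omega> - (\<integral>\<omega>'. Y i \<omega>' \<partial>M)) * (Y j \<omega> - (\<integral>\<omega>'. Y j \<omega>' \<partial>M))))"
  shows "(C1 \<longleftrightarrow> C2) \<and> (C2 \<longleftrightarrow> C3) \<and> (C3 \<longleftrightarrow> C4)"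
proof -
  interpret prob_space M by fact
  have "C1 \<Longrightarrow> C2"
    unfolding C1_def C2_def by blast
  moreover have "C2 \<Longrightarrow> C3"
    unfolding C3_def
  proof (intro allI impI)
    fix I assume "C2" and "I \<subseteq> {1..n} \<and> I \<noteq> {}"
    then show "MAD M (\<lambda>\<omega>. \<Sum>i\<in>I. Y i \<omega>) = (\<Sum>i\<in>I. MAD M (Y i))"
      by (intro MAD_sum_eq_sum_MAD_of_simplex[where A = "{1..n}"]) (simp_all add: C2_def)
  qed
  moreover have "C3 \<Longrightarrow> C4"
    unfolding C4_def
  proof (intro ballI impI)
    fix i j assume "C3" and ij: "i \<in> {1..n}" "j \<in> {1..n}" "i \<noteq> j"
    then have "MAD M (\<lambda>\<omega>. \<Sum>k\<in>{i, j}. Y k \<omega>) = (\<Sum>k\<in>{i, j}. MAD M (Y k))"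
      unfolding C3_def by (metis empty_not_insert empty_subsetI insert_subset)
    with ij show "AE \<omega> in M. 0 \<le> (Y i \<omega> - (\<integral>\<omega>'. Y i \<omega>' \<partial>M)) * (Y j \<omega> - (\<integral>\<omega>'. Y j \<omega>' \<partial>M))"
      by (intro AE_centered_mult_nonneg_of_MAD_add assms(3)) simp_all
  qed
  moreover have "C4 \<Longrightarrow> C1"
    unfolding C1_def
  proof (intro allI impI)
    fix x :: "nat \<Rightarrow> real" assume "C4" and "\<forall>i\<in>{1..n}. 0 \<le> x i"
    then show "MAD M (\<lambda>\<omega>. \<Sum>i=1..n. x i * Y i \<omega>) = (\<Sum>i=1..n. x i * MAD M (Y i))"
      by (intro MAD_weighted_sum_eq_of_AE_centered_mult_nonneg assms(3)) (simp_all add: C4_def)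
  qed
  ultimately show ?thesis
    by blast
qed

end
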